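(* Let $S$ be a finite GCD closed set of positive integers. If the element $x_i\in S$ generates a double-chain set in $S$, then $\Psi_{S,\frac1N}(x_i)\neq 0$.
   Context: All order notions are with respect to divisibility on the positive integers, where the meet is $\gcd$; $S$ is GCD closed if $\gcd(x,y)\in S$ for all $x,y\in S$. $C_S(x)$ is the set of elements of $S$ covered by $x$ in $(S,\mid)$; $\mathrm{meetcl}(C)$ is the set of gcds of all nonempty finite subsets of $C$. An element $x\in S$ generates a double-chain set in $S$ if $\mathrm{meetcl}(C_S(x))\setminus C_S(x)$ is a union of two disjoint (possibly empty) chains under divisibility. $\mu_S$ is the Möbius function of $(S,\mid)$ and $\Psi_{S,\frac1N}(x_i)=\sum_{x_j\in S,\ x_j\mid x_i}\mu_S(x_j,x_i)/x_j$. *)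

theory Defs
  imports Complex_Main
begin

text \<open>Positive integers are modelled as natural numbers; sets S of positive
integers satisfy 0 \<notin> S.\<close>

definition gcd_closed :: "nat set \<Rightarrow> bool" where
  "gcd_closed S \<longleftrightarrow> (\<forall>x\<in>S. \<forall>y\<in>S. gcd x y \<in> S)"

definition covered_by :: "nat set \<Rightarrow> nat \<Rightarrow> nat set" where
  "covered_by S x = {y \<in> S. y dvd x \<and> y \<noteq> x \<and>
      \<not> (\<exists>z\<in>S. y dvd z \<and> z dvd x \<and> z \<noteq> y \<and> z \<noteq> x)}"

definition meetcl :: "nat set \<Rightarrow> nat set" where
  "meetcl C = {Gcd A | A. A \<subseteq> C \<and> A \<noteq> {} \<and> finite A}"

definition dvd_chain :: "nat set \<Rightarrow> bool" where
  "dvd_chain A \<longleftrightarrow> (\<forall>a\<in>A. \<forall>b\<in>A. a dvd b \<or> b dvd a)"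

definition generates_double_chain :: "nat set \<Rightarrow> nat \<Rightarrow> bool" where
  "generates_double_chain S x \<longleftrightarrow>
     (\<exists>A B. A \<inter> B = {} \<and> dvd_chain A \<and> dvd_chain B \<and>
        meetcl (covered_by S x) - covered_by S x = A \<union> B)"

function mobius :: "nat set \<Rightarrow> nat \<Rightarrow> nat \<Rightarrow> int" where
  "mobius S x y =
     (if x \<in> S \<and> y \<in> S \<and> 0 < y \<and> x dvd y then
        (if x = y then 1
         else - (\<Sum>z\<in>{z \<in> S. x dvd z \<and> z dvd y \<and> z \<noteq> y}. mobius S x z))
      else 0)"
  by pat_completeness auto
termination
  apply (relation "measure (\<lambda>(S, x, y). y)")
   apply simp
  apply (auto simp: dvd_imp_le le_neq_implies_less)
  done

definition Psi_inv :: "nat set \<Rightarrow> nat \<Rightarrow> real" where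
  "Psi_inv S xi = (\<Sum>xj\<in>{xj \<in> S. xj dvd xi}. real_of_int (mobius S xj xi) / real xj)"

end

theory Submission
  imports Defs
begin

text \<open>For y in S, both Psi_inv S y and the inclusion-exclusion sum
  \<Sum>T\<subseteq>C. (-1)^|T| / gcd ({y} \<union> T) over the set C of elements covered by y have
  divisor sums 1/y over (S, dvd): for the second, expand 1/n as a divisor sum of the
  Moebius transform of 1/n; a divisor d of y then survives exactly at the unique element
  of S below y that is minimal among the multiples of d, which exists because S is
  gcd-closed. Hence the two agree.

  If x generates a double chain, its covers form an antichain whose pairwise gcds lie in
  two chains. Then some cover c has all its gcds with the other covers dividing a single
  one, w = gcd c c0; deleting c from C changes the sum by -(1/c - 1/w) > 0, so by
  induction the sum is positive once there are two covers. With none or one cover it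
  equals 1/x or 1/x - 1/c.\<close>

lemma sum_Pow_insert:
  fixes h :: "'a set \<Rightarrow> 'b::comm_monoid_add"
  assumes "finite A" "a \<notin> A"
  shows "(\<Sum>T\<in>Pow (insert a A). h T) = (\<Sum>T\<in>Pow A. h T + h (insert a T))"
proof -
  have "inj_on (insert a) (Pow A)"
    using assms(2) by (auto simp: inj_on_def)
  moreover have "(\<Sum>T\<in>Pow (insert a A). h T) = (\<Sum>T\<in>Pow A. h T) + (\<Sum>T\<in>insert a ` Pow A. h T)"
    unfolding Pow_insert using assms by (intro sum.union_disjoint) auto
  ultimately show ?thesis
    by (simp add: sum.reindex sum.distrib)
qed

lemma sum_Pow_minus_one_power:
  assumes "finite A"
  shows "(\<Sum>T\<in>Pow A. (-1::'a::ring_1) ^ card T) = (if A = {} then 1 else 0)"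
proof (cases "A = {}")
  case False
  then have "card {T. T \<in> Pow A \<and> even (card T)} = card {T. T \<in> Pow A \<and> odd (card T)}"
    using card_subsupersets_even_odd[OF assms, of "{}"] by auto
  then show ?thesis
    using False assms by (simp add: sum_alternating_cancels)
qed simp

lemma proper_divisor_double_le:
  fixes w c :: nat
  assumes "w dvd c" "w \<noteq> c" "0 < c"
  shows "2 * w \<le> c"
proof -
  obtain k where c: "c = w * k" using assms(1) by blast
  with assms(2,3) have "k \<noteq> 0" "k \<noteq> 1" by auto
  then show ?thesis using c by simp
qed

definition alt_gcd_sum :: "nat set \<Rightarrow> nat \<Rightarrow> real" where
  "alt_gcd_sum C x = (\<Sum>T\<in>Pow C. (-1) ^ card T / real (Gcd (insert x T)))"

lemma alt_gcd_sum_empty: "alt_gcd_sum {} x = 1 / real x"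
  by (simp add: alt_gcd_sum_def)

lemma alt_gcd_sum_singleton: "alt_gcd_sum {c} x = 1 / real x - 1 / real (gcd x c)"
  using sum_Pow_insert[of "{}" c "\<lambda>T. (-1::real) ^ card T / real (Gcd (insert x T))"]
  by (simp add: alt_gcd_sum_def)

lemma alt_gcd_sum_remove:
  assumes "finite C" "c \<in> C" "c dvd x"
  shows "alt_gcd_sum C x = alt_gcd_sum (C - {c}) x - alt_gcd_sum (C - {c}) c"
proof -
  have C: "C = insert c (C - {c})" using assms(2) by blast
  have step: "(-1) ^ card (insert c T) / real (Gcd (insert x (insert c T)))
          = - ((-1::real) ^ card T / real (Gcd (insert c T)))"
    if "T \<in> Pow (C - {c})" for T
  proof -
    have "finite T" "c \<notin> T" using that assms(1) finite_subset by blast+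
    then have "card (insert c T) = Suc (card T)" by simp
    moreover have "Gcd (insert c T) dvd x"
      using assms(3) by (meson Gcd_dvd dvd_trans insertI1)
    then have "Gcd (insert x (insert c T)) = Gcd (insert c T)"
      by (simp add: Gcd_insert gcd_nat.absorb2)
    ultimately show ?thesis by simp
  qed
  have "alt_gcd_sum C x = (\<Sum>T\<in>Pow (C - {c}). (-1) ^ card T / real (Gcd (insert x T))
      + (-1) ^ card (insert c T) / real (Gcd (insert x (insert c T))))"
    unfolding alt_gcd_sum_def by (subst C, rule sum_Pow_insert) (use assms(1) in auto)
  also have "\<dots> = (\<Sum>T\<in>Pow (C - {c}).
      (-1) ^ card T / real (Gcd (insert x T)) - (-1) ^ card T / real (Gcd (insert c T)))"
    using step by (intro sum.cong) auto
  finally show ?thesis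
    by (simp add: alt_gcd_sum_def sum_subtractf)
qed

lemma alt_gcd_sum_dominated:
  assumes "finite W" "c0 \<in> W" "\<forall>c'\<in>W. gcd c c' dvd gcd c c0"
  shows "alt_gcd_sum W c = 1 / real c - 1 / real (gcd c c0)"
proof -
  define h where "h T = (-1::real) ^ card T / real (Gcd (insert c T))" for T
  have W: "W = insert c0 (W - {c0})" using assms(2) by blast
  have cancel: "h T + h (insert c0 T) = 0" if T: "T \<in> Pow (W - {c0})" "T \<noteq> {}" for T
  proof -
    obtain t where t: "t \<in> T" using T(2) by blast
    have "finite T" "c0 \<notin> T" using T(1) assms(1) finite_subset by blast+
    then have "card (insert c0 T) = Suc (card T)" by simp
    moreover have "t \<in> W" using t T(1) by blast
    then have "Gcd (insert c T) dvd gcd c c0"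
      using t assms(3) by (meson Gcd_dvd dvd_trans gcd_greatest insertI1 insertI2)
    then have "Gcd (insert c T) dvd c0"
      using gcd_dvd2 dvd_trans by blast
    then have "Gcd (insert c (insert c0 T)) = Gcd (insert c T)"
      by (metis Gcd_insert gcd_nat.absorb2 insert_commute)
    ultimately show ?thesis by (simp add: h_def)
  qed
  have "alt_gcd_sum W c = (\<Sum>T\<in>Pow (W - {c0}). h T + h (insert c0 T))"
    unfolding alt_gcd_sum_def h_def by (subst W, rule sum_Pow_insert) (use assms(1) in auto)
  also have "\<dots> = (\<Sum>T\<in>Pow (W - {c0}). if T = {} then h {} + h {c0} else 0)"
    using cancel by (intro sum.cong) auto
  also have "\<dots> = 1 / real c - 1 / real (gcd c c0)"
    using assms(1) by (simp add: h_def)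
  finally show ?thesis .
qed

lemma exists_dominating_gcd:
  assumes "finite C" "2 \<le> card C"
    and gcds: "\<forall>a\<in>C. \<forall>b\<in>C. a \<noteq> b \<longrightarrow> gcd a b \<in> A \<union> B"
    and "dvd_chain A" "dvd_chain B"
  shows "\<exists>c\<in>C. \<exists>c0\<in>C. c0 \<noteq> c \<and> (\<forall>c'\<in>C. c' \<noteq> c \<longrightarrow> gcd c c' dvd gcd c c0)"
proof -
  define P where "P = {(a, b). a \<in> C \<and> b \<in> C \<and> a \<noteq> b}"
  have "finite P" using assms(1) by (auto simp: P_def intro: finite_subset[of _ "C \<times> C"])
  moreover have "\<not> card C \<le> Suc 0" using assms(2) by simp
  then have "P \<noteq> {}" by (auto simp: P_def card_le_Suc0_iff_eq[OF assms(1)])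
  ultimately have "case_prod gcd ` P \<noteq> {}" "Max (case_prod gcd ` P) \<in> case_prod gcd ` P"
    by simp_all
  then obtain a b where ab: "a \<in> C" "b \<in> C" "a \<noteq> b" and ab_max: "gcd a b = Max (case_prod gcd ` P)"
    by (auto simp: P_def)
  define z where "z = gcd a b"
  have zmax: "\<not> z dvd gcd a' b'" if "a' \<in> C" "b' \<in> C" "a' \<noteq> b'" "\<not> gcd a' b' dvd z" for a' b'
  proof
    assume "z dvd gcd a' b'"
    moreover have "gcd a' b' \<le> z"
      unfolding z_def ab_max using \<open>finite P\<close> that by (intro Max_ge) (auto simp: P_def)
    moreover have "0 < gcd a' b'" using that(3) by (cases a') auto
    ultimately show False using that(4) by (metis dvd_antisym dvd_imp_le le_antisym)
  qed
  \<comment> \<open>If neither endpoint of a largest pairwise gcd dominates, the two witnesses against them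
      together with that gcd are three pairwise incomparable elements of two chains.\<close>
  have "(\<forall>c'\<in>C. c' \<noteq> a \<longrightarrow> gcd a c' dvd z) \<or> (\<forall>c'\<in>C. c' \<noteq> b \<longrightarrow> gcd b c' dvd z)"
  proof (rule ccontr)
    assume "\<not> ?thesis"
    then obtain c1 c2 where c1: "c1 \<in> C" "c1 \<noteq> a" "\<not> gcd a c1 dvd z"
      and c2: "c2 \<in> C" "c2 \<noteq> b" "\<not> gcd b c2 dvd z"
      by blast
    define u v where "u = gcd a c1" and "v = gcd b c2"
    have "\<not> u dvd v"
      using c1(3) by (metis u_def v_def z_def dvd_trans gcd_dvd1 gcd_greatest)
    moreover have "\<not> v dvd u"
      using c2(3) by (metis u_def v_def z_def dvd_trans gcd_dvd1 gcd_greatest gcd.commute)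
    moreover have "\<not> z dvd u" "\<not> z dvd v"
      using zmax[OF ab(1) c1(1) c1(2)[symmetric]] zmax[OF ab(2) c2(1) c2(2)[symmetric]] c1(3) c2(3)
      by (auto simp: u_def v_def)
    moreover have "z \<in> A \<union> B" "u \<in> A \<union> B" "v \<in> A \<union> B"
      using gcds ab c1 c2 by (auto simp: z_def u_def v_def)
    ultimately show False
      using c1(3) c2(3) assms(4,5) unfolding dvd_chain_def u_def v_def by blast
  qed
  then show ?thesis
    using ab by (metis gcd.commute z_def)
qed

lemma alt_gcd_sum_pos:
  assumes "finite C" "2 \<le> card C" "0 < x" "\<forall>c\<in>C. c dvd x"
    and "\<forall>a\<in>C. \<forall>b\<in>C. a dvd b \<longrightarrow> a = b"
    and "\<forall>a\<in>C. \<forall>b\<in>C. a \<noteq> b \<longrightarrow> gcd a b \<in> A \<union> B"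
    and "dvd_chain A" "dvd_chain B"
  shows "alt_gcd_sum C x > 0"
  using assms
proof (induction "card C" arbitrary: C rule: less_induct)
  case less
  obtain c c0 where cc: "c \<in> C" "c0 \<in> C" "c0 \<noteq> c"
    and dom: "\<forall>c'\<in>C. c' \<noteq> c \<longrightarrow> gcd c c' dvd gcd c c0"
    using exists_dominating_gcd[of C A B] less.prems by blast
  define w where "w = gcd c c0"
  have pos: "0 < c" "0 < c0"
    using less.prems(3,4) cc by (auto intro: dvd_pos_nat)
  have "w \<noteq> c" "w \<noteq> c0"
    using less.prems(5) cc unfolding w_def by (metis gcd_dvd1 gcd_dvd2)+
  then have "2 * w \<le> c" "2 * w \<le> c0"
    using proper_divisor_double_le pos by (auto simp: w_def)
  moreover have "0 < real w" using pos by (simp add: w_def)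
  ultimately have "1 / real c \<le> 1 / (2 * real w)" "1 / real c0 \<le> 1 / (2 * real w)"
    by (simp_all add: frac_le)
  then have peeled_neg: "1 / real c + 1 / real c0 \<le> 1 / real w"
    by simp
  have remove: "alt_gcd_sum C x = alt_gcd_sum (C - {c}) x - (1 / real c - 1 / real w)"
    using alt_gcd_sum_remove[of C c x] alt_gcd_sum_dominated[of "C - {c}" c0 c] less.prems cc dom
    by (simp add: w_def)
  show ?case
  proof (cases "card C = 2")
    case True
    then have "card (C - {c}) = 1"
      using cc less.prems(1) by simp
    then obtain d where "C - {c} = {d}"
      by (metis card_1_singletonE)
    moreover have "c0 \<in> C - {c}"
      using cc by simp
    ultimately have "C - {c} = {c0}"
      by simp
    moreover have "c0 dvd x"
      using less.prems(4) cc by blast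
    ultimately have "alt_gcd_sum (C - {c}) x = 1 / real x - 1 / real c0"
      by (simp add: alt_gcd_sum_singleton gcd_nat.absorb2)
    moreover have "0 < 1 / real x"
      using less.prems(3) by simp
    ultimately show ?thesis
      using remove peeled_neg by linarith
  next
    case False
    then have "2 \<le> card (C - {c})"
      using cc less.prems(1,2) by simp
    moreover have "card (C - {c}) < card C"
      using less.prems(1) cc(1) by (rule card_Diff1_less)
    ultimately have "alt_gcd_sum (C - {c}) x > 0"
      using less.prems by (intro less.hyps) auto
    moreover have "0 < 1 / real c0"
      using pos by simp
    ultimately show ?thesis
      using remove peeled_neg by linarith
  qed
qed

lemma finite_set_of_divisors:
  fixes y :: nat
  assumes "0 < y" "\<And>z. z \<in> A \<Longrightarrow> z dvd y"
  shows "finite A"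
  using assms(2) by (intro finite_subset[OF _ finite_divisors_nat[OF assms(1)]]) auto

lemma sum_mobius_interval:
  assumes "w \<in> S" "y \<in> S" "0 < y" "w dvd y"
  shows "(\<Sum>z\<in>{z \<in> S. w dvd z \<and> z dvd y}. mobius S w z) = (if w = y then 1 else 0)"
proof (cases "w = y")
  case True
  then have "{z \<in> S. w dvd z \<and> z dvd y} = {y}" using assms by (auto intro: dvd_antisym)
  then show ?thesis using True assms by simp
next
  case False
  have "{z \<in> S. w dvd z \<and> z dvd y} = insert y {z \<in> S. w dvd z \<and> z dvd y \<and> z \<noteq> y}"
    using assms by auto
  moreover have "finite {z \<in> S. w dvd z \<and> z dvd y \<and> z \<noteq> y}"
    using assms(3) by (rule finite_set_of_divisors) simp
  moreover have "mobius S w y = - (\<Sum>z\<in>{z \<in> S. w dvd z \<and> z dvd y \<and> z \<noteq> y}. mobius S w z)"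
    using assms False by (subst mobius.simps) simp
  ultimately show ?thesis using False by simp
qed

lemma sum_Psi_inv_divisors:
  assumes "0 \<notin> S" "y \<in> S"
  shows "(\<Sum>z\<in>{z \<in> S. z dvd y}. Psi_inv S z) = 1 / real y"
proof -
  define Z where "Z = {z \<in> S. z dvd y}"
  have ypos: "0 < y" using assms by (auto intro: gr0I)
  have finZ: "finite Z" using ypos by (rule finite_set_of_divisors) (simp add: Z_def)
  have "(\<Sum>z\<in>Z. Psi_inv S z) = (\<Sum>z\<in>Z. \<Sum>w | w \<in> Z \<and> w dvd z. mobius S w z / real w)"
    unfolding Psi_inv_def Z_def by (intro sum.cong refl arg_cong2[where f = sum]) (auto intro: dvd_trans)
  also have "\<dots> = (\<Sum>w\<in>Z. \<Sum>z | z \<in> Z \<and> w dvd z. mobius S w z / real w)"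
    by (rule sum.swap_restrict[OF finZ finZ])
  also have "\<dots> = (\<Sum>w\<in>Z. if w = y then 1 / real y else 0)"
  proof (rule sum.cong)
    fix w assume w: "w \<in> Z"
    have "{z. z \<in> Z \<and> w dvd z} = {z \<in> S. w dvd z \<and> z dvd y}" by (auto simp: Z_def)
    then have "(\<Sum>z | z \<in> Z \<and> w dvd z. mobius S w z / real w)
        = real_of_int (\<Sum>z\<in>{z \<in> S. w dvd z \<and> z dvd y}. mobius S w z) / real w"
      by (simp add: sum_divide_distrib)
    also have "\<dots> = (if w = y then 1 / real y else 0)"
      using w assms ypos by (subst sum_mobius_interval) (auto simp: Z_def)
    finally show "(\<Sum>z | z \<in> Z \<and> w dvd z. mobius S w z / real w) = (if w = y then 1 / real y else 0)" .
  qed simp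
  also have "\<dots> = 1 / real y" using finZ assms by (simp add: Z_def)
  finally show ?thesis by (simp add: Z_def)
qed

function recip_mobius :: "nat \<Rightarrow> real" where
  "recip_mobius n = (if n = 0 then 0 else 1 / real n - (\<Sum>d | d dvd n \<and> d < n. recip_mobius d))"
  by pat_completeness auto
termination by (relation "measure id") auto

declare recip_mobius.simps [simp del]

lemma sum_divisors_recip_mobius:
  assumes "0 < n"
  shows "(\<Sum>d | d dvd n. recip_mobius d) = 1 / real n"
proof -
  have "{d. d dvd n} = insert n {d. d dvd n \<and> d < n}"
    using assms by (auto simp: dvd_imp_le le_neq_implies_less)
  then have "(\<Sum>d | d dvd n. recip_mobius d) = recip_mobius n + (\<Sum>d | d dvd n \<and> d < n. recip_mobius d)"
    by simp
  also have "\<dots> = 1 / real n"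
    using assms by (subst recip_mobius.simps[of n]) simp
  finally show ?thesis .
qed

text \<open>Expanding each 1/gcd as a divisor sum of recip_mobius, the alternating sum over subsets
  of K kills every divisor that divides some element of K.\<close>
lemma alt_gcd_sum_eq_sum_recip_mobius:
  assumes "0 < x" "finite K"
  shows "alt_gcd_sum K x = (\<Sum>d | d dvd x. if \<forall>c\<in>K. \<not> d dvd c then recip_mobius d else 0)"
proof -
  define D where "D = {d. d dvd x}"
  have finD: "finite D" using assms(1) by (simp add: D_def)
  define h where "h T d = (if T \<subseteq> {c \<in> K. d dvd c} then (-1::real) ^ card T * recip_mobius d else 0)"
    for T d
  have "(-1) ^ card T / real (Gcd (insert x T)) = (\<Sum>d\<in>D. h T d)" if "T \<in> Pow K" for T
  proof -
    have Gpos: "0 < Gcd (insert x T)" using assms(1) by (simp add: Gcd_0_iff)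
    have "{d. d dvd Gcd (insert x T)} = {d \<in> D. T \<subseteq> {c \<in> K. d dvd c}}"
      using that by (auto simp: D_def dvd_Gcd_iff)
    then have "(-1) ^ card T / real (Gcd (insert x T))
        = (-1) ^ card T * (\<Sum>d\<in>D. if T \<subseteq> {c \<in> K. d dvd c} then recip_mobius d else 0)"
      using sum_divisors_recip_mobius[OF Gpos] finD by (simp add: sum.inter_filter)
    also have "\<dots> = (\<Sum>d\<in>D. h T d)"
      unfolding h_def sum_distrib_left by (rule sum.cong) auto
    finally show ?thesis .
  qed
  then have "alt_gcd_sum K x = (\<Sum>T\<in>Pow K. \<Sum>d\<in>D. h T d)"
    unfolding alt_gcd_sum_def by (rule sum.cong[OF refl])
  also have "\<dots> = (\<Sum>d\<in>D. \<Sum>T\<in>Pow K. h T d)"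
    by (rule sum.swap)
  also have "\<dots> = (\<Sum>d\<in>D. if \<forall>c\<in>K. \<not> d dvd c then recip_mobius d else 0)"
  proof (rule sum.cong[OF refl])
    fix d
    define Kd where "Kd = {c \<in> K. d dvd c}"
    have "(\<Sum>T\<in>Pow K. h T d) = (\<Sum>T\<in>{T \<in> Pow K. T \<subseteq> Kd}. (-1) ^ card T * recip_mobius d)"
      unfolding h_def Kd_def using assms(2) by (intro sum.inter_filter[symmetric]) simp
    also have "{T \<in> Pow K. T \<subseteq> Kd} = Pow Kd"
      by (auto simp: Kd_def)
    also have "(\<Sum>T\<in>Pow Kd. (-1) ^ card T * recip_mobius d)
        = (\<Sum>T\<in>Pow Kd. (-1::real) ^ card T) * recip_mobius d"
      by (simp add: sum_distrib_right)
    also have "\<dots> = (if \<forall>c\<in>K. \<not> d dvd c then recip_mobius d else 0)"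
      using assms(2) by (simp add: sum_Pow_minus_one_power Kd_def)
    finally show "(\<Sum>T\<in>Pow K. h T d) = (if \<forall>c\<in>K. \<not> d dvd c then recip_mobius d else 0)" .
  qed
  finally show ?thesis by (simp add: D_def)
qed

lemma covered_by_finite:
  assumes "0 \<notin> S" "x \<in> S"
  shows "finite (covered_by S x)"
  using assms by (intro finite_set_of_divisors[of x]) (auto simp: covered_by_def intro: gr0I)

lemma exists_covered_above:
  assumes "0 \<notin> S" "z \<in> S" "u \<in> S" "u dvd z" "u \<noteq> z"
  shows "\<exists>c\<in>covered_by S z. u dvd c"
proof -
  define M where "M = {v \<in> S. u dvd v \<and> v dvd z \<and> v \<noteq> z}"
  have "0 < z" using assms(1,2) by (auto intro: gr0I)
  then have finM: "finite M" by (rule finite_set_of_divisors) (simp add: M_def)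
  moreover have "u \<in> M" using assms by (simp add: M_def)
  ultimately have cM: "Max M \<in> M" by (intro Max_in) auto
  have "Max M \<in> covered_by S z"
    unfolding covered_by_def
  proof (intro CollectI conjI)
    show "Max M \<in> S" "Max M dvd z" "Max M \<noteq> z" using cM by (auto simp: M_def)
    show "\<not> (\<exists>w\<in>S. Max M dvd w \<and> w dvd z \<and> w \<noteq> Max M \<and> w \<noteq> z)"
    proof
      assume "\<exists>w\<in>S. Max M dvd w \<and> w dvd z \<and> w \<noteq> Max M \<and> w \<noteq> z"
      then obtain w where w: "w \<in> S" "Max M dvd w" "w dvd z" "w \<noteq> Max M" "w \<noteq> z" by blast
      then have "w \<in> M" using cM by (auto simp: M_def intro: dvd_trans)
      then have "w \<le> Max M" using finM by simp
      moreover have "Max M \<le> w" using w assms(1) by (auto intro: dvd_imp_le gr0I)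
      ultimately show False using w(4) by simp
    qed
  qed
  moreover have "u dvd Max M" using cM by (simp add: M_def)
  ultimately show ?thesis by blast
qed

lemma Gcd_in_gcd_closed:
  assumes "gcd_closed S" "finite A" "A \<noteq> {}" "A \<subseteq> S"
  shows "Gcd A \<in> S"
  using assms(2-4)
proof (induction A rule: finite_ne_induct)
  case (insert x F)
  then show ?case using assms(1) by (simp add: gcd_closed_def)
qed simp

lemma minimal_multiples_below_eq:
  assumes "0 \<notin> S" "gcd_closed S" "y \<in> S" "d dvd y"
  shows "{z \<in> S. z dvd y \<and> d dvd z \<and> (\<forall>c\<in>covered_by S z. \<not> d dvd c)}
      = {Gcd {w \<in> S. d dvd w \<and> w dvd y}}"
    (is "?Z = {?m}")
proof -
  define M where "M = {w \<in> S. d dvd w \<and> w dvd y}"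
  have "0 < y" using assms(1,3) by (auto intro: gr0I)
  then have "finite M" by (rule finite_set_of_divisors) (simp add: M_def)
  moreover have "y \<in> M" using assms by (simp add: M_def)
  ultimately have mS: "?m \<in> S"
    using Gcd_in_gcd_closed[OF assms(2)] by (fastforce simp: M_def)
  have dm: "d dvd ?m" and my: "?m dvd y" and m_least: "\<And>w. w \<in> M \<Longrightarrow> ?m dvd w"
    using \<open>y \<in> M\<close> by (auto simp: M_def dvd_Gcd_iff intro: Gcd_dvd)
  have "?m \<in> ?Z"
  proof -
    have "\<not> d dvd c" if "c \<in> covered_by S ?m" for c
    proof
      assume "d dvd c"
      moreover have "c \<in> S" "c dvd ?m" "c \<noteq> ?m" using that by (auto simp: covered_by_def)
      ultimately have "c \<in> M" using my by (auto simp: M_def intro: dvd_trans)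
      then show False using m_least \<open>c dvd ?m\<close> \<open>c \<noteq> ?m\<close> by (blast intro: dvd_antisym)
    qed
    then show ?thesis using mS my dm by simp
  qed
  moreover have "z = ?m" if z: "z \<in> ?Z" for z
  proof (rule ccontr)
    assume "z \<noteq> ?m"
    moreover have "?m dvd z" using z by (intro m_least) (simp add: M_def)
    ultimately obtain c where "c \<in> covered_by S z" "?m dvd c"
      using exists_covered_above[OF assms(1) _ mS] z by force
    then show False using z dm by (blast intro: dvd_trans)
  qed
  ultimately show ?thesis by blast
qed

lemma sum_alt_gcd_sum_covered:
  assumes "0 \<notin> S" "gcd_closed S" "y \<in> S"
  shows "(\<Sum>z\<in>{z \<in> S. z dvd y}. alt_gcd_sum (covered_by S z) z) = 1 / real y"
proof -
  define Z where "Z = {z \<in> S. z dvd y}"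
  define D where "D = {d. d dvd y}"
  define P where "P z d \<longleftrightarrow> d dvd z \<and> (\<forall>c\<in>covered_by S z. \<not> d dvd c)" for z d
  have ypos: "0 < y" using assms(1,3) by (auto intro: gr0I)
  have finZ: "finite Z" using ypos by (rule finite_set_of_divisors) (simp add: Z_def)
  have finD: "finite D" using ypos by (simp add: D_def)
  have "alt_gcd_sum (covered_by S z) z = (\<Sum>d\<in>D. if P z d then recip_mobius d else 0)"
    if "z \<in> Z" for z
  proof -
    have "0 < z" "finite (covered_by S z)"
      using that assms(1) covered_by_finite by (auto simp: Z_def intro: gr0I)
    moreover have "{d. d dvd z} = {d \<in> D. d dvd z}"
      using that by (auto simp: D_def Z_def intro: dvd_trans)
    ultimately show ?thesis
      using finD by (simp add: alt_gcd_sum_eq_sum_recip_mobius sum.inter_filter)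
        (auto simp: P_def intro!: sum.cong)
  qed
  then have "(\<Sum>z\<in>Z. alt_gcd_sum (covered_by S z) z)
      = (\<Sum>z\<in>Z. \<Sum>d\<in>D. if P z d then recip_mobius d else 0)"
    by (rule sum.cong[OF refl])
  also have "\<dots> = (\<Sum>d\<in>D. \<Sum>z\<in>Z. if P z d then recip_mobius d else 0)"
    by (rule sum.swap)
  also have "\<dots> = (\<Sum>d\<in>D. recip_mobius d)"
  proof (rule sum.cong[OF refl])
    fix d assume "d \<in> D"
    then have "{z \<in> Z. P z d} = {Gcd {w \<in> S. d dvd w \<and> w dvd y}}"
      using minimal_multiples_below_eq[OF assms] by (auto simp: D_def Z_def P_def)
    then show "(\<Sum>z\<in>Z. if P z d then recip_mobius d else 0) = recip_mobius d"
      using finZ by (simp add: sum.inter_filter[symmetric])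
  qed
  also have "\<dots> = 1 / real y"
    unfolding D_def using ypos by (rule sum_divisors_recip_mobius)
  finally show ?thesis by (simp add: Z_def)
qed

lemma eq_if_sum_divisors_in_eq:
  fixes f g :: "nat \<Rightarrow> 'a::ab_group_add"
  assumes "0 \<notin> S"
    and sums: "\<And>y. y \<in> S \<Longrightarrow> (\<Sum>z\<in>{z \<in> S. z dvd y}. f z) = (\<Sum>z\<in>{z \<in> S. z dvd y}. g z)"
  shows "y \<in> S \<Longrightarrow> f y = g y"
proof (induction y rule: less_induct)
  case (less y)
  define Z where "Z = {z \<in> S. z dvd y}"
  have ypos: "0 < y" using assms(1) less.prems by (auto intro: gr0I)
  have finZ: "finite Z" using ypos by (rule finite_set_of_divisors) (simp add: Z_def)
  have yZ: "y \<in> Z" using less.prems by (simp add: Z_def)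
  have rest: "(\<Sum>z\<in>Z - {y}. f z) = (\<Sum>z\<in>Z - {y}. g z)"
  proof (rule sum.cong[OF refl])
    fix z assume z: "z \<in> Z - {y}"
    then have "z < y" using ypos by (auto simp: Z_def dvd_imp_le le_neq_implies_less)
    then show "f z = g z" using less.IH z by (auto simp: Z_def)
  qed
  have "(\<Sum>z\<in>Z. f z) = (\<Sum>z\<in>Z. g z)"
    using sums[OF less.prems] by (simp add: Z_def)
  then show ?case
    using rest by (simp add: sum.remove[OF finZ yZ])
qed

lemma Psi_inv_eq_alt_gcd_sum:
  assumes "0 \<notin> S" "gcd_closed S" "y \<in> S"
  shows "Psi_inv S y = alt_gcd_sum (covered_by S y) y"
  using assms(1) _ assms(3)
proof (rule eq_if_sum_divisors_in_eq)
  fix y assume "y \<in> S"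
  then show "(\<Sum>z\<in>{z \<in> S. z dvd y}. Psi_inv S z) = (\<Sum>z\<in>{z \<in> S. z dvd y}. alt_gcd_sum (covered_by S z) z)"
    using sum_Psi_inv_divisors sum_alt_gcd_sum_covered assms(1,2) by simp
qed

lemma covered_by_antichain:
  assumes "a \<in> covered_by S x" "b \<in> covered_by S x" "a dvd b"
  shows "a = b"
  using assms unfolding covered_by_def by blast

lemma generates_double_chainE:
  assumes "generates_double_chain S x"
  obtains A B where "dvd_chain A" "dvd_chain B"
    "\<forall>a\<in>covered_by S x. \<forall>b\<in>covered_by S x. a \<noteq> b \<longrightarrow> gcd a b \<in> A \<union> B"
proof -
  obtain A B where AB: "dvd_chain A" "dvd_chain B"
    "meetcl (covered_by S x) - covered_by S x = A \<union> B"
    using assms unfolding generates_double_chain_def by blast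
  have "gcd a b \<in> A \<union> B"
    if "a \<in> covered_by S x" "b \<in> covered_by S x" "a \<noteq> b" for a b
  proof -
    have "gcd a b \<in> meetcl (covered_by S x)"
      unfolding meetcl_def using that by (intro CollectI exI[of _ "{a, b}"]) auto
    moreover have "gcd a b \<notin> covered_by S x"
      using that covered_by_antichain by (metis gcd_dvd1 gcd_dvd2)
    ultimately show ?thesis using AB(3) by blast
  qed
  then show ?thesis using that AB(1,2) by blast
qed

theorem theorem4p2:
  fixes S :: "nat set" and xi :: nat
  assumes "finite S" and "0 \<notin> S" and "gcd_closed S"
    and "xi \<in> S" and "generates_double_chain S xi"
  shows "Psi_inv S xi \<noteq> 0"
proof -
  define C where "C = covered_by S xi"
  have Psi: "Psi_inv S xi = alt_gcd_sum C xi"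
    unfolding C_def using assms(2-4) by (rule Psi_inv_eq_alt_gcd_sum)
  have xpos: "0 < xi" and finC: "finite C" and dvd: "\<forall>c\<in>C. c dvd xi \<and> c \<noteq> xi"
    using assms(2,4) covered_by_finite by (auto simp: C_def covered_by_def intro: gr0I)
  consider "C = {}" | c where "C = {c}" | "2 \<le> card C"
    using finC by (metis card_0_eq card_1_singletonE less_2_cases not_le One_nat_def)
  then show ?thesis
  proof cases
    case 1
    then show ?thesis using Psi xpos by (simp add: alt_gcd_sum_empty)
  next
    case (2 c)
    then have "alt_gcd_sum C xi = 1 / real xi - 1 / real c" and "c \<noteq> xi"
      using dvd by (simp_all add: alt_gcd_sum_singleton gcd_nat.absorb2)
    then show ?thesis using Psi by simp
  next
    case 3
    obtain A B where "dvd_chain A" "dvd_chain B" "\<forall>a\<in>C. \<forall>b\<in>C. a \<noteq> b \<longrightarrow> gcd a b \<in> A \<union> B"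
      using assms(5) unfolding C_def by (rule generates_double_chainE)
    then have "alt_gcd_sum C xi > 0"
      using alt_gcd_sum_pos[OF finC 3 xpos] dvd covered_by_antichain by (auto simp: C_def)
    then show ?thesis using Psi by simp
  qed
qed

end
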